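(* Let $F$ be a field and $\{E_1,\ldots,E_k\}$ a complete symmetric orthogonal set of idempotents in $F_{n\times n}$. Let $L=(\sigma(r,s))_{1\le r,s\le k}$ be a $k\times k$ array with entries in $\{1,\ldots,k\}$ such that each row and each column of $L$ contains each index exactly once. For each $(r,s)$ let $m_{r,s}$ be a monomial (product of non-negative powers, coefficient $1$) in a set of commuting variables $\mathbf{z}$; the same variable set is used throughout but the monomials may differ. Let $W$ be the $nk\times nk$ block matrix whose $(r,s)$ block is $m_{r,s}E_{\sigma(r,s)}$. Then $W$ is a paraunitary matrix in the variables $\mathbf{z}$, i.e. $WW^*=I_{nk}$.
   Context: For matrices over $\mathbb{C}$, $^*$ is conjugate transpose; otherwise transpose; on polynomial matrices $^*$ additionally replaces each variable $z$ by $z^{-1}$. A complete symmetric orthogonal set of idempotents is $\{E_1,\ldots,E_k\}$ with $E_i\ne0$, $E_i^2=E_i$, $E_iE_j=0$ ($i\ne j$), $\sum_iE_i=I_n$, $E_i^*=E_i$. *)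

theory Defs
  imports "Jordan_Normal_Form.Matrix" "HOL-Library.Poly_Mapping"
begin

text \<open>Involution on the base field: the paper uses complex conjugation over the
complex numbers and the identity otherwise.  We take it as a parameter that is
an involutive field automorphism (covering both cases).\<close>
definition involutive_field_aut :: "('a::field \<Rightarrow> 'a) \<Rightarrow> bool" where
  "involutive_field_aut c \<longleftrightarrow>
     (\<forall>x y. c (x + y) = c x + c y) \<and> (\<forall>x y. c (x * y) = c x * c y) \<and>
     c 1 = 1 \<and> (\<forall>x. c (c x) = x)"

definition mat_star :: "('a \<Rightarrow> 'a) \<Rightarrow> 'a mat \<Rightarrow> 'a mat" where
  "mat_star c A = mat (dim_col A) (dim_row A) (\<lambda>(i, j). c (A $$ (j, i)))"

definition mat_sum :: "nat \<Rightarrow> 'b set \<Rightarrow> ('b \<Rightarrow> 'a::comm_monoid_add mat) \<Rightarrow> 'a mat" where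
  "mat_sum n I f = mat n n (\<lambda>ij. \<Sum>i\<in>I. f i $$ ij)"

definition csos_idempotents :: "('a::field \<Rightarrow> 'a) \<Rightarrow> nat \<Rightarrow> nat \<Rightarrow> (nat \<Rightarrow> 'a mat) \<Rightarrow> bool" where
  "csos_idempotents c n k E \<longleftrightarrow>
     (\<forall>i\<in>{1..k}. E i \<in> carrier_mat n n \<and> E i \<noteq> 0\<^sub>m n n \<and> E i * E i = E i
                 \<and> mat_star c (E i) = E i) \<and>
     (\<forall>i\<in>{1..k}. \<forall>j\<in>{1..k}. i \<noteq> j \<longrightarrow> E i * E j = 0\<^sub>m n n) \<and>
     mat_sum n {1..k} E = 1\<^sub>m n"

text \<open>Laurent polynomials over 'a in the commuting variables indexed by 'v:
finitely supported maps from integer exponent vectors to coefficients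
(the group ring of the free abelian group on 'v).\<close>
type_synonym ('v, 'a) laurent = "('v \<Rightarrow>\<^sub>0 int) \<Rightarrow>\<^sub>0 'a"

definition laurent_const :: "'a::zero \<Rightarrow> ('v, 'a) laurent" where
  "laurent_const a = Poly_Mapping.single 0 a"

definition monomial :: "('v \<Rightarrow>\<^sub>0 nat) \<Rightarrow> ('v, 'a::{zero,one}) laurent" where
  "monomial e = Poly_Mapping.single (Poly_Mapping.map int e) 1"

definition laurent_star :: "('a::zero \<Rightarrow> 'a) \<Rightarrow> ('v, 'a) laurent \<Rightarrow> ('v, 'a) laurent" where
  "laurent_star c p = Poly_Mapping.map c (Poly_Mapping.map_key uminus p)"

definition lmat_star :: "('a::zero \<Rightarrow> 'a) \<Rightarrow> ('v, 'a) laurent mat \<Rightarrow> ('v, 'a) laurent mat" where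
  "lmat_star c A = mat (dim_col A) (dim_row A) (\<lambda>(i, j). laurent_star c (A $$ (j, i)))"

definition latin_square :: "nat \<Rightarrow> (nat \<Rightarrow> nat \<Rightarrow> nat) \<Rightarrow> bool" where
  "latin_square k \<sigma> \<longleftrightarrow>
     (\<forall>r\<in>{1..k}. bij_betw (\<lambda>s. \<sigma> r s) {1..k} {1..k}) \<and>
     (\<forall>s\<in>{1..k}. bij_betw (\<lambda>r. \<sigma> r s) {1..k} {1..k})"

definition block_W :: "nat \<Rightarrow> nat \<Rightarrow> (nat \<Rightarrow> 'a::field mat) \<Rightarrow> (nat \<Rightarrow> nat \<Rightarrow> nat)
    \<Rightarrow> (nat \<Rightarrow> nat \<Rightarrow> ('v \<Rightarrow>\<^sub>0 nat)) \<Rightarrow> ('v, 'a) laurent mat" where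
  "block_W n k E \<sigma> m = mat (n * k) (n * k) (\<lambda>(i, j).
     let r = i div n + 1; s = j div n + 1 in
       monomial (m r s) * laurent_const (E (\<sigma> r s) $$ (i mod n, j mod n)))"

end

theory Submission
  imports Defs
begin

(* Block (r, r') of W W^* is the sum over s of z^(m r s - m r' s) E_sigma(r,s) E_sigma(r',s),
   using E_t^* = E_t.  For r ~= r' the indices sigma(r,s) and sigma(r',s) differ because column s
   of the Latin square has no repetition, so every term vanishes by orthogonality.  For r = r'
   the monomials cancel, idempotency leaves the sum of E_sigma(r,s) over s, and since row r is a
   permutation of 1..k this is the sum of all E_t, which is the identity. *)

lemma sum_lessThan_mult_blocks:
  "(\<Sum>j<k * n. f j) = (\<Sum>s<k. \<Sum>b<n. f (s * n + b :: nat))"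
proof -
  have "(\<Sum>j\<in>{s * n..<s * n + n}. f j) = (\<Sum>b<n. f (s * n + b))" for s
    by (simp add: sum.shift_bounds_nat_ivl[symmetric] lessThan_atLeast0 add.commute)
  then show ?thesis
    by (simp flip: sum.nat_group)
qed

lemma single_sum:
  "Poly_Mapping.single x (\<Sum>i\<in>A. g i) = (\<Sum>i\<in>A. Poly_Mapping.single x (g i))"
  using sum_comp_morphism[of "Poly_Mapping.single x" g A] by (simp add: single_add o_def)

lemma involutive_field_aut_zero: "involutive_field_aut c \<Longrightarrow> c 0 = 0"
  unfolding involutive_field_aut_def by (metis add_cancel_right_right)

lemma laurent_star_single:
  assumes "c 0 = 0"
  shows "laurent_star c (Poly_Mapping.single e x) = Poly_Mapping.single (- e) (c x)"
proof -
  have "inj (uminus :: ('v \<Rightarrow>\<^sub>0 int) \<Rightarrow> _)"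
    by (simp add: inj_def)
  from map_key_single[OF this, of "- e" x] show ?thesis
    unfolding laurent_star_def using assms by simp
qed

lemma mat_star_fixed_index:
  assumes "mat_star c A = A" "A \<in> carrier_mat n n" "a < n" "b < n"
  shows "c (A $$ (a, b)) = A $$ (b, a)"
proof -
  have "mat_star c A $$ (b, a) = c (A $$ (a, b))"
    using assms(2-) unfolding mat_star_def by auto
  with assms(1) show ?thesis by simp
qed

lemma latin_square_in_range:
  "latin_square k \<sigma> \<Longrightarrow> r \<in> {1..k} \<Longrightarrow> s \<in> {1..k} \<Longrightarrow> \<sigma> r s \<in> {1..k}"
  unfolding latin_square_def by (meson bij_betwE)

lemma block_index_bounds: "i < n * (k :: nat) \<Longrightarrow> i div n + 1 \<in> {1..k} \<and> i mod n < n"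
  by (cases "n = 0") (auto simp: Suc_le_eq less_mult_imp_div_less mult.commute)

lemma block_W_index:
  assumes "i < n * k" "j < n * k"
  shows "block_W n k E \<sigma> m $$ (i, j) =
    Poly_Mapping.single (Poly_Mapping.map int (m (i div n + 1) (j div n + 1)))
      (E (\<sigma> (i div n + 1) (j div n + 1)) $$ (i mod n, j mod n))"
  using assms unfolding block_W_def monomial_def laurent_const_def by (simp add: mult_single Let_def)

lemma lmat_star_block_W_index:
  assumes "c 0 = 0" and i: "i < n * k" and j: "j < n * k"
    and "E (\<sigma> (i div n + 1) (j div n + 1)) \<in> carrier_mat n n"
    and "mat_star c (E (\<sigma> (i div n + 1) (j div n + 1))) = E (\<sigma> (i div n + 1) (j div n + 1))"
  shows "lmat_star c (block_W n k E \<sigma> m) $$ (j, i) =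
    Poly_Mapping.single (- Poly_Mapping.map int (m (i div n + 1) (j div n + 1)))
      (E (\<sigma> (i div n + 1) (j div n + 1)) $$ (j mod n, i mod n))"
proof -
  have "lmat_star c (block_W n k E \<sigma> m) $$ (j, i) = laurent_star c (block_W n k E \<sigma> m $$ (i, j))"
    using i j unfolding lmat_star_def block_W_def by simp
  moreover have "i mod n < n" "j mod n < n"
    using block_index_bounds[OF i] block_index_bounds[OF j] by simp_all
  ultimately show ?thesis
    using assms by (simp add: block_W_index laurent_star_single mat_star_fixed_index)
qed

lemma block_W_mult_star_index:
  assumes "c 0 = 0"
    and E: "\<And>t. t \<in> {1..k} \<Longrightarrow> E t \<in> carrier_mat n n \<and> mat_star c (E t) = E t"
    and \<sigma>: "\<And>r s. r \<in> {1..k} \<Longrightarrow> s \<in> {1..k} \<Longrightarrow> \<sigma> r s \<in> {1..k}"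
    and i: "i < n * k" and l: "l < n * k"
  shows "(block_W n k E \<sigma> m * lmat_star c (block_W n k E \<sigma> m)) $$ (i, l) =
    (\<Sum>s\<in>{1..k}. Poly_Mapping.single
       (Poly_Mapping.map int (m (i div n + 1) s) - Poly_Mapping.map int (m (l div n + 1) s))
       ((E (\<sigma> (i div n + 1) s) * E (\<sigma> (l div n + 1) s)) $$ (i mod n, l mod n)))"
    (is "_ = (\<Sum>s\<in>_. ?term s)")
proof -
  define W where "W = block_W n k E \<sigma> m"
  define r where "r = i div n + 1"
  define r' where "r' = l div n + 1"
  define a where "a = i mod n"
  define a' where "a' = l mod n"
  have r: "r \<in> {1..k}" "r' \<in> {1..k}" and a: "a < n" "a' < n"
    using block_index_bounds[OF i] block_index_bounds[OF l]
    unfolding r_def r'_def a_def a'_def by auto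
  have dim: "dim_row W = n * k" "dim_col W = n * k"
    unfolding W_def block_W_def by simp_all
  define d where "d s = Poly_Mapping.map int (m r s) - Poly_Mapping.map int (m r' s)" for s
  have entry: "W $$ (i, s * n + b) * lmat_star c W $$ (s * n + b, l) =
      Poly_Mapping.single (d (s + 1)) (E (\<sigma> r (s + 1)) $$ (a, b) * E (\<sigma> r' (s + 1)) $$ (b, a'))"
    if "s < k" "b < n" for s b
  proof -
    have "s * n + b < (s + 1) * n" using that by simp
    also have "\<dots> \<le> k * n" using that by (intro mult_right_mono) auto
    finally have j: "s * n + b < n * k" by (simp add: mult.commute)
    have jdiv: "(s * n + b) div n = s" "(s * n + b) mod n = b" and "s + 1 \<in> {1..k}"
      using that by auto
    then have "E (\<sigma> r' (s + 1)) \<in> carrier_mat n n" "mat_star c (E (\<sigma> r' (s + 1))) = E (\<sigma> r' (s + 1))"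
      using E \<sigma> r(2) by blast+
    then have "lmat_star c W $$ (s * n + b, l) =
        Poly_Mapping.single (- Poly_Mapping.map int (m r' (s + 1))) (E (\<sigma> r' (s + 1)) $$ (b, a'))"
      using lmat_star_block_W_index[where c = c, OF assms(1) l j] jdiv
      unfolding W_def r'_def a'_def by simp
    then show ?thesis
      unfolding W_def block_W_index[OF i j] using jdiv by (simp add: mult_single r_def a_def d_def)
  qed
  have "(W * lmat_star c W) $$ (i, l) = (\<Sum>j<n * k. W $$ (i, j) * lmat_star c W $$ (j, l))"
    using i l dim unfolding lmat_star_def by (simp add: scalar_prod_def lessThan_atLeast0)
  also have "\<dots> = (\<Sum>s<k. \<Sum>b<n.
      Poly_Mapping.single (d (s + 1)) (E (\<sigma> r (s + 1)) $$ (a, b) * E (\<sigma> r' (s + 1)) $$ (b, a')))"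
    using entry by (simp add: mult.commute[of n k] sum_lessThan_mult_blocks)
  also have "\<dots> = (\<Sum>s<k. ?term (s + 1))"
  proof (rule sum.cong[OF refl])
    fix s assume "s \<in> {..<k}"
    then have "s + 1 \<in> {1..k}" by simp
    then have "E (\<sigma> r (s + 1)) \<in> carrier_mat n n" "E (\<sigma> r' (s + 1)) \<in> carrier_mat n n"
      using E \<sigma> r by blast+
    with a show "(\<Sum>b<n. Poly_Mapping.single (d (s + 1))
        (E (\<sigma> r (s + 1)) $$ (a, b) * E (\<sigma> r' (s + 1)) $$ (b, a'))) = ?term (s + 1)"
      unfolding d_def r_def r'_def a_def a'_def
      by (simp add: single_sum[symmetric] scalar_prod_def lessThan_atLeast0)
  qed
  also have "\<dots> = (\<Sum>s\<in>{1..k}. ?term s)"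
    by (rule sum.reindex_bij_witness[where i="\<lambda>s. s - 1" and j="\<lambda>s. s + 1"]) auto
  finally show ?thesis unfolding W_def .
qed

lemma latin_block_product_sum:
  fixes E :: "nat \<Rightarrow> 'a::field mat" and e :: "nat \<Rightarrow> nat \<Rightarrow> 'v \<Rightarrow>\<^sub>0 int"
  assumes E: "csos_idempotents c n k E" and \<sigma>: "latin_square k \<sigma>"
    and r: "r \<in> {1..k}" "r' \<in> {1..k}" and a: "a < n" "a' < n"
  shows "(\<Sum>s\<in>{1..k}. Poly_Mapping.single (e r s - e r' s) ((E (\<sigma> r s) * E (\<sigma> r' s)) $$ (a, a'))) =
    (if r = r' \<and> a = a' then 1 else (0 :: ('v, 'a) laurent))"
proof (cases "r = r'")
  case True
  have "(\<Sum>s\<in>{1..k}. Poly_Mapping.single (e r s - e r' s) ((E (\<sigma> r s) * E (\<sigma> r' s)) $$ (a, a'))) =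
      (\<Sum>s\<in>{1..k}. Poly_Mapping.single 0 (E (\<sigma> r s) $$ (a, a')))"
    using True E latin_square_in_range[OF \<sigma> r(1)] unfolding csos_idempotents_def by simp
  also have "\<dots> = Poly_Mapping.single 0 (\<Sum>t\<in>{1..k}. E t $$ (a, a'))"
    using \<sigma> r(1) sum.reindex_bij_betw[of "\<sigma> r" "{1..k}" "{1..k}" "\<lambda>t. E t $$ (a, a')"]
    unfolding latin_square_def by (simp add: single_sum[symmetric])
  also have "(\<Sum>t\<in>{1..k}. E t $$ (a, a')) = 1\<^sub>m n $$ (a, a')"
    using E a unfolding csos_idempotents_def mat_sum_def by (metis index_mat(1))
  finally show ?thesis using True a by simp
next
  case False
  have "E (\<sigma> r s) * E (\<sigma> r' s) = 0\<^sub>m n n" if "s \<in> {1..k}" for s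
  proof -
    have "\<sigma> r s \<noteq> \<sigma> r' s"
      using \<sigma> that r False unfolding latin_square_def bij_betw_def inj_on_def by blast
    then show ?thesis
      using E latin_square_in_range[OF \<sigma> r(1) that] latin_square_in_range[OF \<sigma> r(2) that]
      unfolding csos_idempotents_def by blast
  qed
  with False a show ?thesis by simp
qed

theorem theorem15:
  fixes c :: "'a::field \<Rightarrow> 'a"
    and n k :: nat
    and E :: "nat \<Rightarrow> 'a mat"
    and \<sigma> :: "nat \<Rightarrow> nat \<Rightarrow> nat"
    and m :: "nat \<Rightarrow> nat \<Rightarrow> ('v \<Rightarrow>\<^sub>0 nat)"
  assumes "involutive_field_aut c"
    and "csos_idempotents c n k E"
    and "latin_square k \<sigma>"
  shows "block_W n k E \<sigma> m * lmat_star c (block_W n k E \<sigma> m) = 1\<^sub>m (n * k)"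
proof (rule eq_matI)
  fix i l assume "i < dim_row (1\<^sub>m (n * k))" "l < dim_col (1\<^sub>m (n * k))"
  then have il: "i < n * k" "l < n * k" by simp_all
  have E: "E t \<in> carrier_mat n n \<and> mat_star c (E t) = E t" if "t \<in> {1..k}" for t
    using assms(2) that unfolding csos_idempotents_def by blast
  define r r' a a' where "r = i div n + 1" and "r' = l div n + 1" and "a = i mod n" and "a' = l mod n"
  have ra: "r \<in> {1..k}" "r' \<in> {1..k}" "a < n" "a' < n"
    using block_index_bounds[OF il(1)] block_index_bounds[OF il(2)] by (simp_all add: r_def r'_def a_def a'_def)
  have "(block_W n k E \<sigma> m * lmat_star c (block_W n k E \<sigma> m)) $$ (i, l) =
      (\<Sum>s\<in>{1..k}. Poly_Mapping.single (Poly_Mapping.map int (m r s) - Poly_Mapping.map int (m r' s))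
        ((E (\<sigma> r s) * E (\<sigma> r' s)) $$ (a, a')))"
    unfolding r_def r'_def a_def a'_def
    using involutive_field_aut_zero[OF assms(1)] E latin_square_in_range[OF assms(3)] il
    by (rule block_W_mult_star_index)
  also have "\<dots> = (if r = r' \<and> a = a' then 1 else 0)"
    using assms(2,3) ra by (rule latin_block_product_sum)
  also have "\<dots> = 1\<^sub>m (n * k) $$ (i, l)"
  proof -
    have "i = l \<longleftrightarrow> r = r' \<and> a = a'"
      unfolding r_def r'_def a_def a'_def by (metis add_right_cancel div_mult_mod_eq)
    with il show ?thesis by simp
  qed
  finally show "(block_W n k E \<sigma> m * lmat_star c (block_W n k E \<sigma> m)) $$ (i, l) = 1\<^sub>m (n * k) $$ (i, l)" .
qed (simp_all add: block_W_def lmat_star_def)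

end
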